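(* Let $P(t,q)=\log\big(\sum_{n=1}^\infty2^{-nt}n^q\big)$ on $D=\{(t,q): t>0,\ \text{or}\ t=0,\ q<-1\}$, let $\tilde D=\{(t,q)\in D:0\le t\le1\}$, and let $\xi_0=\int_0^1\log\lceil-\log_2x\rceil\,dx$. For $\xi>0$ let $(t(\xi),q(\xi))\in\tilde D$ be the unique solution in $\tilde D$ of the system $P(t,q)=q\xi$, $\frac{\partial P}{\partial q}(t,q)=\xi$. Then $q(\xi)<0$ for $0<\xi<\xi_0$, $q(\xi_0)=0$, and $q(\xi)>0$ for $\xi>\xi_0$.
   Context: It is part of the setting (taken from the paper) that for every $\xi>0$ the system has a unique solution in $\tilde D$, that this solution is $(1,0)$ for $\xi=\xi_0$, and that $\frac{\partial P}{\partial q}(1,0)=\xi_0$. *)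

theory Defs
  imports "HOL-Analysis.Analysis"
begin

definition Pfun :: "real \<Rightarrow> real \<Rightarrow> real" where
  "Pfun t q = ln (\<Sum>n. 2 powr (- real (Suc n) * t) * real (Suc n) powr q)"

definition dPdq :: "real \<Rightarrow> real \<Rightarrow> real" where
  "dPdq t q = deriv (\<lambda>s. Pfun t s) q"

definition Dom :: "(real \<times> real) set" where
  "Dom = {(t, q). t > 0 \<or> (t = 0 \<and> q < -1)}"

definition Dtilde :: "(real \<times> real) set" where
  "Dtilde = {(t, q). (t, q) \<in> Dom \<and> 0 \<le> t \<and> t \<le> 1}"

definition xi0 :: real where
  "xi0 = integral {0..1} (\<lambda>x. ln (real_of_int (ceiling (- log 2 x))))"

definition solves :: "real \<Rightarrow> real \<times> real \<Rightarrow> bool" where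
  "solves \<xi> p \<longleftrightarrow> p \<in> Dtilde \<and> Pfun (fst p) (snd p) = snd p * \<xi> \<and> dPdq (fst p) (snd p) = \<xi>"

definition tq :: "real \<Rightarrow> real \<times> real" where
  "tq \<xi> = (THE p. solves \<xi> p)"

definition qsol :: "real \<Rightarrow> real" where
  "qsol \<xi> = snd (tq \<xi>)"

end

theory Submission
  imports Defs "HOL-Real_Asymp.Real_Asymp"
begin

text \<open>On \<open>Dtilde\<close> we have \<open>t \<le> 1\<close>, so \<open>P(t,q) \<ge> P(1,q)\<close>. Jensen's inequality for the concave
  logarithm and the probability weights \<open>2^-n\<close> gives \<open>P(1,q) \<ge> q \<xi>\<^sub>0\<close> with
  \<open>\<xi>\<^sub>0 = \<Sum> 2^-n log n = \<partial>P/\<partial>q(1,0)\<close>. Hence a solution of the system satisfies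
  \<open>q \<xi> = P(t,q) \<ge> q \<xi>\<^sub>0\<close>, i.e. \<open>q (\<xi> - \<xi>\<^sub>0) \<ge> 0\<close>. Finally \<open>q = 0\<close> forces \<open>\<xi> = \<xi>\<^sub>0\<close>: the series
  \<open>P(t,0) = -log (2^t - 1)\<close> vanishes only at \<open>t = 1\<close>, where \<open>\<partial>P/\<partial>q = \<xi>\<^sub>0\<close>.\<close>

definition pressure_term :: "real \<Rightarrow> real \<Rightarrow> nat \<Rightarrow> real" where
  "pressure_term t q n = 2 powr (- real (Suc n) * t) * real (Suc n) powr q"

lemma Pfun_eq_ln_suminf: "Pfun t q = ln (suminf (pressure_term t q))"
  unfolding Pfun_def pressure_term_def ..

lemma pressure_term_1: "pressure_term 1 q = (\<lambda>n. (1/2) ^ Suc n * real (Suc n) powr q)"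
  by (simp add: fun_eq_iff pressure_term_def powr_minus powr_realpow power_one_over inverse_eq_divide
      del: of_nat_Suc)

lemma summable_pressure_term:
  assumes "(t, q) \<in> Dom"
  shows "summable (pressure_term t q)"
proof (cases "t > 0")
  case True
  show ?thesis
  proof (rule summable_comparison_test_bigo)
    show "summable (\<lambda>n. norm (real n powr (-2)))"
      using summable_real_powr_iff[of "-2"] by simp
    show "pressure_term t q \<in> O(\<lambda>n. real n powr (-2))"
      unfolding pressure_term_def using True by real_asymp
  qed
next
  case False
  then have "t = 0" and "q < -1" using assms by (auto simp: Dom_def)
  then have "summable (\<lambda>n. real n powr q)" using summable_real_powr_iff by blast
  then show ?thesis
    using summable_Suc_iff[of "\<lambda>n. real n powr q"] \<open>t = 0\<close>
    by (simp add: pressure_term_def[abs_def])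
qed

lemma suminf_pressure_term_pos:
  assumes "(t, q) \<in> Dom"
  shows "0 < suminf (pressure_term t q)"
  by (rule suminf_pos[OF summable_pressure_term[OF assms]]) (simp add: pressure_term_def)

lemma Pfun_antimono_t:
  assumes "(t, q) \<in> Dom" and "t \<le> t'"
  shows "Pfun t' q \<le> Pfun t q"
proof -
  have Dom': "(t', q) \<in> Dom" using assms by (cases "t' = t") (auto simp: Dom_def)
  have "suminf (pressure_term t' q) \<le> suminf (pressure_term t q)"
  proof (rule suminf_le)
    fix n
    have "2 powr (- real (Suc n) * t') \<le> 2 powr (- real (Suc n) * t)"
      using assms(2) by (intro powr_mono) auto
    then show "pressure_term t' q n \<le> pressure_term t q n"
      unfolding pressure_term_def by (intro mult_right_mono) auto
  qed (use summable_pressure_term[OF Dom'] summable_pressure_term[OF assms(1)] in auto)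
  then show ?thesis
    unfolding Pfun_eq_ln_suminf using suminf_pressure_term_pos[OF Dom'] by (intro ln_mono) auto
qed

lemma suminf_pressure_term_0:
  assumes "t > 0"
  shows "suminf (pressure_term t 0) = 1 / (2 powr t - 1)"
proof -
  define r where "r = 2 powr (- t)"
  have "0 < r" "r < 1" using assms by (auto simp: r_def powr_less_one)
  have "pressure_term t 0 = (\<lambda>n. r * r ^ n)"
  proof
    fix n
    have "2 powr (- real (Suc n) * t) = r powr real (Suc n)"
      by (simp add: r_def powr_powr algebra_simps)
    also have "\<dots> = r ^ Suc n" using \<open>0 < r\<close> by (rule powr_realpow)
    finally show "pressure_term t 0 n = r * r ^ n" by (simp add: pressure_term_def)
  qed
  moreover have "(\<lambda>n. r * r ^ n) sums (r * (1 / (1 - r)))"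
    using \<open>0 < r\<close> \<open>r < 1\<close> by (intro sums_mult geometric_sums) simp
  moreover have "r * (1 / (1 - r)) = 1 / (2 powr t - 1)"
    using \<open>r < 1\<close> by (simp add: r_def powr_minus field_simps)
  ultimately show ?thesis by (simp add: sums_iff)
qed

lemma Pfun_0_eq_0_iff:
  assumes "t > 0"
  shows "Pfun t 0 = 0 \<longleftrightarrow> t = 1"
proof -
  have "1 < 2 powr t" using assms powr_less_mono[of 0 t 2] by simp
  then have "Pfun t 0 = 0 \<longleftrightarrow> 2 powr t = 2 powr 1"
    by (auto simp: Pfun_eq_ln_suminf suminf_pressure_term_0[OF assms] field_simps)
  then show ?thesis using powr_inj[of 2 t 1] by simp
qed

lemma weighted_suminf_ln_le_ln:
  fixes w x :: "nat \<Rightarrow> real"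
  assumes w: "w sums 1" "\<And>n. 0 \<le> w n" and x: "\<And>n. 0 < x n"
    and mean: "(\<lambda>n. w n * x n) sums m" and L: "(\<lambda>n. w n * ln (x n)) sums L"
  shows "L \<le> ln m"
proof -
  have wx_nonneg: "0 \<le> w n * x n" for n using w(2) x by (simp add: less_imp_le)
  have "m \<noteq> 0"
  proof
    assume "m = 0"
    then have "suminf (\<lambda>n. w n * x n) = 0" using mean by (simp add: sums_iff)
    then have "w n * x n = 0" for n
      using suminf_eq_zero_iff[OF sums_summable[OF mean] wx_nonneg] by simp
    then have "w n = 0" for n using x[of n] by (metis less_irrefl mult_eq_0_iff)
    then have "w = (\<lambda>_. 0)" by auto
    with w(1) have "(\<lambda>_. 0 :: real) sums 1" by simp
    from sums_unique2[OF this sums_zero] show False by simp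
  qed
  moreover have "0 \<le> m" using sums_le[OF _ sums_zero mean] wx_nonneg by blast
  ultimately have "0 < m" by simp
  have "w n * ln (x n) \<le> w n * (ln m - 1) + w n * x n / m" for n
  proof -
    have "ln (x n / m) \<le> x n / m - 1" using x \<open>0 < m\<close> by (intro ln_le_minus_one) simp
    then have "ln (x n) \<le> ln m - 1 + x n / m" using x[of n] \<open>0 < m\<close> by (simp add: ln_div)
    then have "w n * ln (x n) \<le> w n * (ln m - 1 + x n / m)" using w(2) by (rule mult_left_mono)
    then show ?thesis by (simp add: distrib_left)
  qed
  moreover have "(\<lambda>n. w n * (ln m - 1) + w n * x n / m) sums (1 * (ln m - 1) + m / m)"
    by (intro sums_add sums_mult2 sums_divide w(1) mean)
  ultimately have "L \<le> 1 * (ln m - 1) + m / m" by (rule sums_le[OF _ L])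
  with \<open>0 < m\<close> show ?thesis by simp
qed

definition xi0_series :: real where
  "xi0_series = (\<Sum>n. (1/2) ^ Suc n * ln (real (Suc n)))"

lemma half_power_Suc_sums: "(\<lambda>n. (1/2::real) ^ Suc n) sums 1"
  using sums_mult[OF geometric_sums[of "1/2::real"], of "1/2"] by simp

lemma summable_half_power_Suc_times_square:
  "summable (\<lambda>n. (1/2::real) ^ Suc n * (real (Suc n) * real (Suc n)))"
proof (rule summable_comparison_test_bigo)
  show "summable (\<lambda>n. norm (real n powr (-2)))"
    using summable_real_powr_iff[of "-2"] by simp
  show "(\<lambda>n. (1/2::real) ^ Suc n * (real (Suc n) * real (Suc n))) \<in> O(\<lambda>n. real n powr (-2))"
    by real_asymp
qed

lemma ln_le_square:
  fixes x :: real
  assumes "1 \<le> x"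
  shows "ln x \<le> x * x"
proof -
  have "ln x \<le> x - 1" using assms by (intro ln_le_minus_one) simp
  also have "\<dots> \<le> 1 * x" by simp
  also have "\<dots> \<le> x * x" using assms by (intro mult_right_mono) auto
  finally show ?thesis .
qed

lemma summable_xi0_series: "summable (\<lambda>n. (1/2::real) ^ Suc n * ln (real (Suc n)))"
  by (rule summable_comparison_test'[OF summable_half_power_Suc_times_square])
    (simp add: ln_le_square del: of_nat_Suc)

lemma xi0_series_pos: "0 < xi0_series"
  unfolding xi0_series_def by (rule suminf_pos2[OF summable_xi0_series, of 1]) auto

lemma linear_le_Pfun_1: "q * xi0_series \<le> Pfun 1 q"
  unfolding Pfun_eq_ln_suminf
proof (rule weighted_suminf_ln_le_ln[OF half_power_Suc_sums])
  have "summable (pressure_term 1 q)" by (rule summable_pressure_term) (simp add: Dom_def)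
  then show "(\<lambda>n. (1/2) ^ Suc n * real (Suc n) powr q) sums suminf (pressure_term 1 q)"
    unfolding pressure_term_1 by (rule summable_sums)
  show "(\<lambda>n. (1/2) ^ Suc n * ln (real (Suc n) powr q)) sums (q * xi0_series)"
    using sums_mult[OF summable_sums[OF summable_xi0_series], of q]
    by (simp add: xi0_series_def ln_powr algebra_simps del: of_nat_Suc)
qed auto

lemma has_field_derivative_suminf_pressure_term_1:
  assumes "\<bar>q\<bar> < 1"
  shows "((\<lambda>s. suminf (pressure_term 1 s)) has_field_derivative
           (\<Sum>n. (1/2) ^ Suc n * (ln (real (Suc n)) * real (Suc n) powr q))) (at q)"
  unfolding pressure_term_1
proof (rule has_field_derivative_series'(2)[where S = "{-1<..<1}"])
  show "((\<lambda>s. (1/2) ^ Suc n * real (Suc n) powr s) has_field_derivative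
          (1/2) ^ Suc n * (ln (real (Suc n)) * real (Suc n) powr p)) (at p within {-1<..<1})"
    for n p
  proof -
    have "((\<lambda>s. real (Suc n) powr s) has_real_derivative
            1 * ln (real (Suc n)) * real (Suc n) powr p) (at p)"
      by (rule has_real_derivative_const_powr) (rule DERIV_ident)
    from DERIV_cmult[OF this, of "(1/2) ^ Suc n"] show ?thesis
      by (simp add: has_field_derivative_at_within)
  qed
  show "uniformly_convergent_on {-1<..<1}
          (\<lambda>n p. \<Sum>i<n. (1/2::real) ^ Suc i * (ln (real (Suc i)) * real (Suc i) powr p))"
  proof (rule Weierstrass_m_test'[OF _ summable_half_power_Suc_times_square])
    fix n and p :: real
    assume "p \<in> {-1<..<1}"
    then have "real (Suc n) powr p \<le> real (Suc n)"
      using powr_mono[of p 1 "real (Suc n)"] by simp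
    moreover have "ln (real (Suc n)) \<le> real (Suc n)"
      by (intro less_imp_le ln_less_self) simp
    ultimately have "ln (real (Suc n)) * real (Suc n) powr p \<le> real (Suc n) * real (Suc n)"
      by (intro mult_mono) auto
    then show "norm ((1/2::real) ^ Suc n * (ln (real (Suc n)) * real (Suc n) powr p))
                 \<le> (1/2) ^ Suc n * (real (Suc n) * real (Suc n))"
      by (simp del: of_nat_Suc)
  qed
  show "summable (\<lambda>n. (1/2::real) ^ Suc n * real (Suc n) powr 0)"
    using sums_summable[OF half_power_Suc_sums] by simp
  show "q \<in> interior {-1<..<1}" using assms by auto
qed auto

lemma dPdq_1_0: "dPdq 1 0 = xi0_series"
proof -
  have sum_0: "suminf (pressure_term 1 0) = 1"
    using half_power_Suc_sums by (simp add: pressure_term_1 sums_iff)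
  have "((\<lambda>q. suminf (pressure_term 1 q)) has_field_derivative xi0_series) (at 0)"
    using has_field_derivative_suminf_pressure_term_1[of 0] by (simp add: xi0_series_def)
  then have "((\<lambda>q. Pfun 1 q) has_field_derivative xi0_series) (at 0)"
    unfolding Pfun_eq_ln_suminf by (auto intro!: derivative_eq_intros simp: sum_0)
  then show ?thesis unfolding dPdq_def by (rule DERIV_imp_deriv)
qed

lemma solves_mult_xi0_series_le:
  assumes "solves \<xi> (t, q)"
  shows "q * xi0_series \<le> q * \<xi>"
proof -
  have "(t, q) \<in> Dom" "t \<le> 1" "Pfun t q = q * \<xi>"
    using assms by (auto simp: solves_def Dtilde_def)
  then show ?thesis using Pfun_antimono_t[of t q 1] linear_le_Pfun_1[of q] by linarith
qed

lemma solves_q_0_imp_xi0_series: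
  assumes "solves \<xi> (t, 0)"
  shows "\<xi> = xi0_series"
proof -
  have "(t, 0) \<in> Dom" "Pfun t 0 = 0" "dPdq t 0 = \<xi>"
    using assms by (auto simp: solves_def Dtilde_def)
  then have "t = 1" using Pfun_0_eq_0_iff by (auto simp: Dom_def)
  with \<open>dPdq t 0 = \<xi>\<close> show ?thesis by (simp add: dPdq_1_0)
qed

lemma solves_q_neg:
  assumes "solves \<xi> (t, q)" and "\<xi> < xi0_series"
  shows "q < 0"
  using solves_mult_xi0_series_le[OF assms(1)] solves_q_0_imp_xi0_series[of \<xi> t] assms
  by (cases q "0::real" rule: linorder_cases) (auto simp: mult_le_cancel_left)

lemma solves_q_pos:
  assumes "solves \<xi> (t, q)" and "xi0_series < \<xi>"
  shows "0 < q"
  using solves_mult_xi0_series_le[OF assms(1)] solves_q_0_imp_xi0_series[of \<xi> t] assms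
  by (cases q "0::real" rule: linorder_cases) (auto simp: mult_le_cancel_left)

theorem proposition4p5:
  assumes unique: "\<forall>\<xi>>0. \<exists>!p. solves \<xi> p"
    and at_xi0: "tq xi0 = (1, 0)"
    and deriv10: "dPdq 1 0 = xi0"
  shows "(\<forall>\<xi>. 0 < \<xi> \<and> \<xi> < xi0 \<longrightarrow> qsol \<xi> < 0)
       \<and> qsol xi0 = 0
       \<and> (\<forall>\<xi>. \<xi> > xi0 \<longrightarrow> qsol \<xi> > 0)"
proof -
  have xi0: "xi0 = xi0_series" using deriv10 dPdq_1_0 by simp
  have sol: "solves \<xi> (fst (tq \<xi>), qsol \<xi>)" if "0 < \<xi>" for \<xi>
    using theI'[of "solves \<xi>"] unique that by (simp add: tq_def qsol_def)
  show ?thesis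
    using solves_q_neg[OF sol] solves_q_pos[OF sol] xi0_series_pos at_xi0
    by (auto simp: xi0 qsol_def)
qed

end
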